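(* Let $N$ be an even positive integer and $\hbar=1/(2\pi N)$. For $n,m\in\{0,\dots,N-1\}$ the matrix elements of $F$ on $\mathcal{H}_\hbar(0)$ are \[ (\Phi_n^{(0,0)},F\Phi_m^{(0,0)})_P=\sum_{a=0}^{N-1}(\mathcal{F}^N)^{-1}_{na}\,M^{(n)}_{am}, \] where $(\mathcal{F}^N)^{-1}_{na}=e^{2\pi i na/N}/\sqrt N$, $\mathcal{F}^{N/2}_{jk}=e^{-2\pi i jk/(N/2)}/\sqrt{N/2}$, and $M^{(n)}$ is the $N\times N$ block-diagonal matrix with $M^{(n)}_{am}=0$ unless $a,m$ both lie in $\{0,\dots,N/2-1\}$ or both lie in $\{N/2,\dots,N-1\}$, and: for $n$ even, $M^{(n)}_{am}=\mathcal{F}^{N/2}_{am}$ if $a,m<N/2$ and $M^{(n)}_{am}=\mathcal{F}^{N/2}_{a-N/2,\,m-N/2}$ if $a,m\ge N/2$; for $n$ odd, $M^{(n)}_{am}=e^{i\pi(n-2m)/N}\mathcal{F}^{N/2}_{am}$ if $a,m<N/2$ and $M^{(n)}_{am}=e^{i\pi(n-(2m-N))/N}\mathcal{F}^{N/2}_{a-N/2,\,m-N/2}$ if $a,m\ge N/2$.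
   Context: On $L^2(\mathbb{R})$ with $[\widehat{x},\widehat{p}]=i\hbar$, $|x\rangle_x$ are position eigen-distributions, and $\Phi_m^{(0,0)}=N^{-1/2}\sum_{k\in\mathbb{Z}}|m/N+k\rangle_x$ ($m\in\mathbb{Z}$; $\Phi_{m+N}^{(0,0)}=\Phi_m^{(0,0)}$). $\mathcal{H}_\hbar(0)$ is the $N$-dimensional space spanned by $\Phi_0^{(0,0)},\dots,\Phi_{N-1}^{(0,0)}$, equipped with the paper's inner product $(\cdot,\cdot)_P$, with respect to which these vectors are orthonormal. $X^s=e^{is\widehat{x}/\hbar}$, $Y^s=e^{is\widehat{p}/\hbar}$ for real $s$. Projections $L,R,E_x,O_x$ are multiplication in position representation by the indicators of $[0,1/2)+\mathbb{Z}$, $[1/2,1)+\mathbb{Z}$, $[0,1)+2\mathbb{Z}$, $[1,2)+2\mathbb{Z}$; $B,T,E_p,O_p$ are the analogous projections in momentum representation (momentum eigen-distributions normalized by $\langle x|p\rangle=(2\pi\hbar)^{-1/2}e^{ixp/\hbar}$) onto $[0,1/2)+\mathbb{Z}$, $[1/2,1)+\mathbb{Z}$, $[0,1)+2\mathbb{Z}$, $[1,2)+2\mathbb{Z}$; all act on $\delta$-comb distributions in the natural way. $S=\exp\!\left(-\frac{i\log2}{2\hbar}(\widehat{x}\widehat{p}+\widehat{p}\widehat{x})\right)$, acting by $S|x\rangle_x=\sqrt2|2x\rangle_x$. The propagator is $F=S(L+X^{-1}R)(E_p+Y^{-1/2}O_p)$, which the paper also writes as $(E_x+X^{-1/2}O_x)(B+Y^{-1}T)S$;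 $F$ maps $\mathcal{H}_\hbar(0)$ into itself. *)

theory Defs
  imports "HOL-Analysis.Analysis"
begin

text \<open>A (periodic) delta-comb distribution  sum_x c(x) |x>_x  is represented by its
  coefficient function c :: real => complex (c x = coefficient of the position
  eigen-distribution |x>_x).\<close>

type_synonym comb = "real \<Rightarrow> complex"

definition Phi :: "nat \<Rightarrow> int \<Rightarrow> comb" where
  "Phi N m = (\<lambda>x. if (\<exists>k::int. x = real_of_int m / real N + real_of_int k)
                    then complex_of_real (1 / sqrt (real N)) else 0)"

text \<open>The paper's inner product on H_hbar(0) (with respect to which Phi_0..Phi_{N-1}
  are orthonormal): for psi = sum_m b_m Phi_m one has b_m = sqrt N * psi(m/N).\<close>
definition ipP :: "nat \<Rightarrow> comb \<Rightarrow> comb \<Rightarrow> complex" where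
  "ipP N \<phi> \<psi> = of_nat N * (\<Sum>j<N. cnj (\<phi> (real j / real N)) * \<psi> (real j / real N))"

text \<open>X^s = exp(i s x/hbar) (multiplication), Y^s = exp(i s p/hbar) (translation:
  (Y^s psi)(x) = psi(x+s), so Y^s |a> = |a - s>), S|x> = sqrt 2 |2x>.\<close>
definition Xop :: "real \<Rightarrow> real \<Rightarrow> comb \<Rightarrow> comb" where
  "Xop h s \<psi> = (\<lambda>x. exp (\<i> * complex_of_real (s * x / h)) * \<psi> x)"

definition Yop :: "real \<Rightarrow> comb \<Rightarrow> comb" where
  "Yop s \<psi> = (\<lambda>x. \<psi> (x + s))"

definition Sop :: "comb \<Rightarrow> comb" where
  "Sop \<psi> = (\<lambda>y. complex_of_real (sqrt 2) * \<psi> (y / 2))"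

definition setL :: "real set" where "setL = {x. x - of_int \<lfloor>x\<rfloor> < 1/2}"
definition setR :: "real set" where "setR = {x. x - of_int \<lfloor>x\<rfloor> \<ge> 1/2}"
definition setE :: "real set" where "setE = {x. even \<lfloor>x\<rfloor>}"
definition setO :: "real set" where "setO = {x. odd \<lfloor>x\<rfloor>}"

definition posproj :: "real set \<Rightarrow> comb \<Rightarrow> comb" where
  "posproj A \<psi> = (\<lambda>x. (if x \<in> A then 1 else 0) * \<psi> x)"

text \<open>A comb supported in (1/M)Z and
  of period P (M,P positive integers) has momentum representation (with
  <x|p> = (2 pi hbar)^(-1/2) exp(ixp/hbar)) supported on p_s = 2 pi hbar s / P with
  coefficients d_s = (2 pi hbar)^(1/2)/P * sum_{r<PM} c(r/M) exp(-i (r/M) p_s/hbar),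
  of period PM in s.  If A is invariant under p -> p + 2 pi hbar M, multiplying by the
  indicator of A and transforming back gives the comb below.\<close>
definition valid_res :: "real \<Rightarrow> nat \<Rightarrow> nat \<Rightarrow> real set \<Rightarrow> comb \<Rightarrow> bool" where
  "valid_res h M P A c \<longleftrightarrow> M > 0 \<and> P > 0 \<and>
     (\<forall>x. c x \<noteq> 0 \<longrightarrow> (\<exists>k::int. x = real_of_int k / real M)) \<and>
     (\<forall>x. c (x + real P) = c x) \<and>
     (\<forall>p. p \<in> A \<longleftrightarrow> p + 2 * pi * h * real M \<in> A)"

definition momproj_res :: "real \<Rightarrow> nat \<Rightarrow> nat \<Rightarrow> real set \<Rightarrow> comb \<Rightarrow> comb" where
  "momproj_res h M P A c = (\<lambda>x.
     if (\<exists>k::int. x = real_of_int k / real M) then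
       (1 / of_nat (P * M)) *
       (\<Sum>s<P * M. (if 2 * pi * h * real s / real P \<in> A then 1 else 0) *
          (\<Sum>r<P * M. c (real r / real M) *
             exp (\<i> * complex_of_real ((x - real r / real M) * (2 * pi * h * real s / real P) / h))))
     else 0)"

text \<open>The momentum projection itself: the common value for all admissible
  resolutions (M,P) (it does not depend on the resolution).\<close>
definition momproj :: "real \<Rightarrow> real set \<Rightarrow> comb \<Rightarrow> comb" where
  "momproj h A c = (THE \<phi>. \<exists>M P. valid_res h M P A c \<and> \<phi> = momproj_res h M P A c)"

definition Fop :: "real \<Rightarrow> comb \<Rightarrow> comb" where
  "Fop h \<psi> = (let \<psi>1 = (\<lambda>x. momproj h setE \<psi> x + Yop (-1/2) (momproj h setO \<psi>) x);
                  \<psi>2 = (\<lambda>x. posproj setL \<psi>1 x + Xop h (-1) (posproj setR \<psi>1) x)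
              in Sop \<psi>2)"

definition FinvN :: "nat \<Rightarrow> nat \<Rightarrow> nat \<Rightarrow> complex" where
  "FinvN N n a = exp (2 * pi * \<i> * of_nat n * of_nat a / of_nat N) / complex_of_real (sqrt (real N))"

definition Fhalf :: "nat \<Rightarrow> nat \<Rightarrow> nat \<Rightarrow> complex" where
  "Fhalf N j k = exp (- 2 * pi * \<i> * of_nat j * of_nat k / of_nat (N div 2))
                 / complex_of_real (sqrt (real (N div 2)))"

definition Mmat :: "nat \<Rightarrow> nat \<Rightarrow> nat \<Rightarrow> nat \<Rightarrow> complex" where
  "Mmat N n a m =
     (if a < N div 2 \<and> m < N div 2 then
        (if even n then Fhalf N a m
         else exp (\<i> * pi * (of_nat n - 2 * of_nat m) / of_nat N) * Fhalf N a m)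
      else if N div 2 \<le> a \<and> N div 2 \<le> m then
        (if even n then Fhalf N (a - N div 2) (m - N div 2)
         else exp (\<i> * pi * (of_nat n - (2 * of_nat m - of_nat N)) / of_nat N)
              * Fhalf N (a - N div 2) (m - N div 2))
      else 0)"

end

theory Submission
  imports Defs
begin

(*
  Phi_m is a delta comb on m/N + Z.  For hbar = 1/(2 pi N) its momentum representation lives
  on (1/N) Z, so the momentum projections onto the 2Z-periodic sets [0,1) + 2Z and [1,2) + 2Z
  turn Phi_m into a trigonometric sum over 2N frequencies w/N, whatever resolution is used to
  compute them.  At the node n/N the position projections L, R act trivially, because
  n/(2N) lies in [0,1/2); so (F Phi_m)(n/N) is sqrt 2 times (E_p Phi_m)(n/(2N)) plus
  (O_p Phi_m)(n/(2N) - 1/2).  The shift by -1/2 multiplies the frequency N + w by (-1)^(n+w)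
  relative to the frequency w, so only the frequencies of the parity of n survive:

    (Phi_n, F Phi_m)_P = sqrt 2 / N * sum_{t < N/2} exp(2 pi i alpha (2t + n mod 2)),
    alpha = n/(2N) - m/N.

  The matrix side reduces to the same sum block by block; for odd n the phases of M^(n)
  supply the shift by one frequency.
*)

section \<open>Exponential sums\<close>

lemma cis_eqI_2pi:
  assumes "a = b + 2 * pi * of_int k"
  shows "cis a = cis b"
  using assms by (simp add: cis_mult[symmetric])

lemma cis_pi_nat: "cis (pi * real k) = (-1) ^ k"
  using Complex.DeMoivre[of pi k] by (simp add: mult.commute)

lemma sum_roots_of_unity_cis:
  assumes q: "q > 0"
  shows "(\<Sum>u<q. cis (2*pi * of_int j * real u / real q)) = (if int q dvd j then of_nat q else 0)"
proof (cases "int q dvd j")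
  case True
  then obtain l where "j = int q * l" by blast
  then have "cis (2*pi * of_int j * real u / real q) = 1" for u
    using q by (simp add: cis_eqI_2pi[of _ 0 "l * int u"])
  then show ?thesis using True by simp
next
  case False
  define z where "z = cis (2*pi * of_int j / real q)"
  have zu: "cis (2*pi * of_int j * real u / real q) = z ^ u" for u
    unfolding z_def Complex.DeMoivre by (simp add: field_simps)
  have "z ^ q = 1"
    using q by (simp add: z_def Complex.DeMoivre)
  moreover have "z \<noteq> 1"
  proof
    assume "z = 1"
    then obtain n :: int where "2*pi * of_int j / real q = of_int (2*n) * pi"
      by (auto simp: z_def cis_conv_exp exp_eq_1)
    then have "real_of_int j = of_int (int q * n)" using q by (simp add: field_simps)
    then show False using False by (simp only: of_int_eq_iff) simp
  qed
  ultimately show ?thesis using False by (simp add: zu geometric_sum)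
qed

lemma sum_lessThan_mult_split:
  fixes a b :: nat
  shows "(\<Sum>r<a*b. f r) = (\<Sum>k<a. \<Sum>u<b. f (k*b + u))"
proof -
  have "(\<Sum>r<a*b. f r) = (\<Sum>k<a. sum f {k*b..<k*b+b})"
    using sum.nat_group[of f b a] by simp
  also have "\<dots> = (\<Sum>k<a. \<Sum>u<b. f (k*b + u))"
  proof (rule sum.cong[OF refl])
    fix k
    have "sum f {0+k*b..<b+k*b} = (\<Sum>u=0..<b. f (u+k*b))" by (rule sum.shift_bounds_nat_ivl)
    then show "sum f {k*b..<k*b+b} = (\<Sum>u<b. f (k*b+u))"
      by (simp add: atLeast0LessThan add.commute)
  qed
  finally show ?thesis .
qed

lemma sum_lessThan_double:
  fixes N :: nat
  shows "(\<Sum>v<2*N. f v) = (\<Sum>v<N. f v) + (\<Sum>w<N. f (N + w))"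
  using sum_lessThan_mult_split[of f 2 N] by (simp add: numeral_2_eq_2)

lemma sum_lessThan_double_lower:
  fixes N :: nat
  shows "(\<Sum>v<2*N. if v < N then f v else 0) = (\<Sum>v<N. f v)"
  by (simp add: sum_lessThan_double)

lemma sum_lessThan_double_upper:
  fixes N :: nat
  shows "(\<Sum>v<2*N. if N \<le> v then f v else 0) = (\<Sum>w<N. f (N + w))"
  by (simp add: sum_lessThan_double)

lemma sum_lessThan_if_dvd:
  fixes P M :: nat
  assumes "P > 0"
  shows "(\<Sum>s<P*M. if P dvd s then f s else 0) = (\<Sum>t<M. f (t*P))"
proof -
  have "{s \<in> {..<P*M}. P dvd s} = (\<lambda>t. t*P) ` {..<M}"
    using assms by (auto elim!: dvdE simp: mult.commute)
  moreover have "inj_on (\<lambda>t. t*P) {..<M}"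
    using assms by (auto intro: inj_onI)
  ultimately show ?thesis
    by (simp add: sum.inter_filter[symmetric] sum.reindex)
qed

lemma sum_parity_filter:
  fixes f :: "nat \<Rightarrow> 'a::comm_ring_1"
  shows "(\<Sum>w<2*K. (1 + (-1) ^ (n + w)) * f w) = 2 * (\<Sum>t<K. f (2*t + n mod 2))"
proof -
  define g where "g w = (1 + (-1) ^ (n + w)) * f w" for w
  have "(\<Sum>w<K*2. g w) = (\<Sum>t<K. \<Sum>e<2. g (t*2 + e))"
    by (rule sum_lessThan_mult_split)
  also have "\<dots> = (\<Sum>t<K. g (2*t) + g (2*t + 1))"
    by (simp add: numeral_2_eq_2 mult.commute[of _ "Suc (Suc 0)"])
  also have "\<dots> = (\<Sum>t<K. 2 * f (2*t + n mod 2))"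
  proof (rule sum.cong[OF refl])
    fix t
    have "g (2*t) = (1 + (-1) ^ n) * f (2*t)" and "g (2*t + 1) = (1 - (-1) ^ n) * f (2*t + 1)"
      by (simp_all add: g_def power_add power_mult)
    then show "g (2*t) + g (2*t + 1) = 2 * f (2*t + n mod 2)"
      by (cases "even n") (simp_all add: odd_iff_mod_2_eq_one)
  qed
  finally show ?thesis by (simp add: g_def sum_distrib_left mult.commute)
qed

lemma inverse_sqrt_double_mult:
  assumes "N = 2*K"
  shows "1 / sqrt (real N) * (1 / sqrt (real K)) = sqrt 2 / real N"
proof (cases "K = 0")
  case False
  have "sqrt (real N) = sqrt 2 * sqrt (real K)" using assms by (simp add: real_sqrt_mult)
  then show ?thesis using assms False by (simp add: field_simps)
qed (use assms in simp)

lemma setE_add_even: "x + 2 * of_int k \<in> setE \<longleftrightarrow> x \<in> setE"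
proof -
  have "\<lfloor>x + 2 * of_int k\<rfloor> = \<lfloor>x\<rfloor> + 2 * k" using floor_add_int[of x "2 * k"] by simp
  then show ?thesis by (simp add: setE_def)
qed

lemma setO_eq_Compl_setE: "setO = - setE"
  by (auto simp: setO_def setE_def)

lemma setO_add_even: "x + 2 * of_int k \<in> setO \<longleftrightarrow> x \<in> setO"
  by (simp add: setO_eq_Compl_setE setE_add_even)

lemma setE_period_even:
  assumes period: "\<forall>p. p \<in> setE \<longleftrightarrow> p + t \<in> setE"
  shows "\<exists>k::int. t = 2 * of_int k"
proof -
  have "(0::real) \<in> setE" by (simp add: setE_def)
  then have "even \<lfloor>t\<rfloor>" using period[rule_format, of 0] by (simp add: setE_def)
  moreover have "t = of_int \<lfloor>t\<rfloor>"
  proof (rule ccontr)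
    define d where "d = t - of_int \<lfloor>t\<rfloor>"
    assume "t \<noteq> of_int \<lfloor>t\<rfloor>"
    then have "0 < d" "d < 1" using floor_correct[of t] unfolding d_def by linarith+
    then have "\<lfloor>1 - d\<rfloor> = 0" by (simp add: floor_eq_iff)
    then have "1 - d \<in> setE" by (simp add: setE_def)
    then have "of_int (\<lfloor>t\<rfloor> + 1) \<in> setE" using period[rule_format, of "1 - d"] by (simp add: d_def add.commute)
    then show False using \<open>even \<lfloor>t\<rfloor>\<close> by (simp add: setE_def)
  qed
  moreover obtain k where "\<lfloor>t\<rfloor> = 2 * k" using \<open>even \<lfloor>t\<rfloor>\<close> by (rule evenE)
  ultimately show ?thesis by (intro exI[of _ k]) simp
qed

lemma setO_period_even:
  "\<forall>p. p \<in> setO \<longleftrightarrow> p + t \<in> setO \<Longrightarrow> \<exists>k::int. t = 2 * of_int k"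
  by (rule setE_period_even) (simp add: setO_eq_Compl_setE)

lemma setE_grid: "v < 2*N \<Longrightarrow> real v / real N \<in> setE \<longleftrightarrow> v < N"
proof (cases "v < N")
  case True
  then have "\<lfloor>real v / real N\<rfloor> = 0" by (simp add: floor_eq_iff)
  then show ?thesis using True by (simp add: setE_def)
next
  case False
  moreover assume "v < 2*N"
  ultimately have "\<lfloor>real v / real N\<rfloor> = 1" by (simp add: floor_eq_iff field_simps)
  then show ?thesis using False by (simp add: setE_def)
qed

lemma setO_grid: "v < 2*N \<Longrightarrow> real v / real N \<in> setO \<longleftrightarrow> N \<le> v"
  by (simp add: setO_eq_Compl_setE setE_grid not_less)

lemma Phi_add_int: "Phi N m (x + of_int k) = Phi N m x"
proof -
  have "(\<exists>k'::int. x + of_int k = of_int m / real N + of_int k') \<longleftrightarrow>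
        (\<exists>k'::int. x = of_int m / real N + of_int k')"
  proof
    assume "\<exists>k'::int. x + of_int k = of_int m / real N + of_int k'"
    then obtain k' where "x + of_int k = of_int m / real N + of_int k'" by blast
    then show "\<exists>k'::int. x = of_int m / real N + of_int k'" by (intro exI[of _ "k' - k"]) simp
  next
    assume "\<exists>k'::int. x = of_int m / real N + of_int k'"
    then obtain k' where "x = of_int m / real N + of_int k'" by blast
    then show "\<exists>k'::int. x + of_int k = of_int m / real N + of_int k'" by (intro exI[of _ "k' + k"]) simp
  qed
  then show ?thesis by (simp add: Phi_def)
qed

lemma Phi_grid:
  assumes N: "N > 0" and m: "m < N" and q: "q > 0" and u: "u < 2*N*q"
  shows "Phi N (int m) (real u / real (2*N*q))
           = (if u = 2*q*m then complex_of_real (1 / sqrt (real N)) else 0)"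
proof -
  have "(\<exists>k::int. real u / real (2*N*q) = of_int (int m) / real N + of_int k) \<longleftrightarrow> u = 2*q*m"
  proof
    assume "\<exists>k::int. real u / real (2*N*q) = of_int (int m) / real N + of_int k"
    then obtain k :: int where "real u / real (2*N*q) = real m / real N + of_int k" by auto
    then have "real_of_int (int u) = of_int (int (2*q*m) + int (2*N*q) * k)"
      using N q by (simp add: field_simps)
    then have "int u mod int (2*N*q) = int (2*q*m) mod int (2*N*q)"
      by (simp only: of_int_eq_iff) simp
    then have "u mod (2*N*q) = (2*q*m) mod (2*N*q)"
      by (simp only: zmod_int[symmetric] of_nat_eq_iff)
    moreover have "2*q*m < 2*N*q" using m q by simp
    ultimately show "u = 2*q*m" using u by simp
  next
    assume "u = 2*q*m"
    then show "\<exists>k::int. real u / real (2*N*q) = of_int (int m) / real N + of_int k"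
      using N q by (intro exI[of _ 0]) (simp add: field_simps)
  qed
  then show ?thesis by (simp add: Phi_def)
qed

lemma Phi_node:
  assumes "N > 0" and "n < N" and "j < N"
  shows "Phi N (int n) (real j / real N) = (if j = n then complex_of_real (1 / sqrt (real N)) else 0)"
  using Phi_grid[of N n 1 "2*j"] assms by simp

lemma ipP_Phi_left:
  assumes N: "N > 0" and n: "n < N"
  shows "ipP N (Phi N (int n)) \<psi> = complex_of_real (sqrt (real N)) * \<psi> (real n / real N)"
proof -
  have "ipP N (Phi N (int n)) \<psi>
      = of_nat N * (\<Sum>j<N. if j = n then complex_of_real (1 / sqrt (real N)) * \<psi> (real j / real N) else 0)"
    unfolding ipP_def by (intro arg_cong[where f="(*) _"] sum.cong) (simp_all add: Phi_node[OF N n])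
  also have "\<dots> = complex_of_real (real N / sqrt (real N)) * \<psi> (real n / real N)"
    using n by simp
  finally show ?thesis by (simp add: real_div_sqrt)
qed

section \<open>Momentum projections of Phi\<close>

lemma sum_Phi_cis:
  assumes N: "N > 0" and m: "m < N" and q: "q > 0" and P: "P > 0"
  shows "(\<Sum>r<P*(2*N*q). Phi N (int m) (real r / real (2*N*q))
                         * cis (2*pi*(x - real r / real (2*N*q)) * real s / real P))
       = (if P dvd s then of_nat P * complex_of_real (1 / sqrt (real N))
                          * cis (2*pi*(x - real m / real N) * real s / real P)
          else 0)"
proof -
  define M where "M = 2*N*q"
  define c where "c = complex_of_real (1 / sqrt (real N)) * cis (2*pi*(x - real m / real N) * real s / real P)"
  have M: "M > 0" using N q by (simp add: M_def)
  have block: "(\<Sum>u<M. Phi N (int m) (real (k*M+u) / real M) * cis (2*pi*(x - real (k*M+u) / real M) * real s / real P))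
             = c * cis (2*pi * of_int (- int s) * real k / real P)" for k
  proof -
    have "Phi N (int m) (real (k*M+u) / real M) = (if u = 2*q*m then complex_of_real (1 / sqrt (real N)) else 0)"
      if "u < M" for u
    proof -
      have "real (k*M+u) / real M = real u / real M + of_int (int k)" using M by (simp add: field_simps)
      then show ?thesis using Phi_grid[OF N m q] that by (simp only: Phi_add_int) (simp add: M_def)
    qed
    then have "(\<Sum>u<M. Phi N (int m) (real (k*M+u) / real M) * cis (2*pi*(x - real (k*M+u) / real M) * real s / real P))
             = (\<Sum>u<M. if u = 2*q*m then complex_of_real (1 / sqrt (real N))
                 * cis (2*pi*(x - real (k*M+u) / real M) * real s / real P) else 0)"
      by (intro sum.cong) simp_all
    also have "\<dots> = complex_of_real (1 / sqrt (real N)) * cis (2*pi*(x - real (k*M+2*q*m) / real M) * real s / real P)"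
      using m q by (simp add: M_def)
    also have "cis (2*pi*(x - real (k*M+2*q*m) / real M) * real s / real P)
             = cis (2*pi*(x - real m / real N) * real s / real P) * cis (2*pi * of_int (- int s) * real k / real P)"
      unfolding cis_mult using N q P by (intro arg_cong[where f=cis]) (simp add: M_def field_simps)
    finally show ?thesis by (simp add: c_def mult.assoc)
  qed
  have "(\<Sum>r<P*M. Phi N (int m) (real r / real M) * cis (2*pi*(x - real r / real M) * real s / real P))
      = c * (\<Sum>k<P. cis (2*pi * of_int (- int s) * real k / real P))"
    by (simp only: sum_lessThan_mult_split block sum_distrib_left)
  also have "\<dots> = (if P dvd s then of_nat P * c else 0)"
    unfolding sum_roots_of_unity_cis[OF P] by simp
  finally show ?thesis by (simp add: M_def c_def mult.assoc)
qed

lemma sum_even_periodic_cis: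
  fixes N q m :: nat and j :: int
  assumes N: "N > 0" and q: "q > 0" and A: "\<And>p k. p + 2 * of_int k \<in> A \<longleftrightarrow> p \<in> A"
  defines "y \<equiv> of_int j / real (2*N*q) - real m / real N"
  shows "(\<Sum>t<2*N*q. (if real t / real N \<in> A then 1 else 0) * cis (2*pi*y*real t))
       = (if int q dvd j then of_nat q else 0)
         * (\<Sum>v<2*N. (if real v / real N \<in> A then 1 else 0) * cis (2*pi*y*real v))"
proof -
  define f where "f v = (if real v / real N \<in> A then 1 else 0) * cis (2*pi*y*real v)" for v
  have shift: "f (u*(2*N) + v) = cis (2*pi * of_int j * real u / real q) * f v" for u v
  proof -
    have "real (u*(2*N) + v) / real N = real v / real N + 2 * of_int (int u)"
      using N by (simp add: field_simps)
    then have "(real (u*(2*N) + v) / real N \<in> A) = (real v / real N \<in> A)"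
      by (simp only: A)
    moreover have "cis (2*pi*y*real (u*(2*N) + v))
                 = cis (2*pi * of_int j * real u / real q) * cis (2*pi*y*real v)"
      unfolding cis_mult
      by (rule cis_eqI_2pi[where k="- (2 * int m * int u)"]) (use N q in \<open>simp add: y_def field_simps\<close>)
    ultimately show ?thesis by (simp add: f_def)
  qed
  have "(\<Sum>t<2*N*q. f t) = (\<Sum>u<q. \<Sum>v<2*N. f (u*(2*N) + v))"
    using sum_lessThan_mult_split[of f q "2*N"] by (simp only: mult.commute[of q])
  also have "\<dots> = (\<Sum>u<q. cis (2*pi * of_int j * real u / real q)) * (\<Sum>v<2*N. f v)"
    by (simp only: shift sum_product)
  finally show ?thesis
    unfolding sum_roots_of_unity_cis[OF q] f_def .
qed

definition Phi_momproj :: "nat \<Rightarrow> nat \<Rightarrow> real set \<Rightarrow> comb" where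
  "Phi_momproj N m A x =
     (if \<exists>j::int. x = of_int j / real (2*N) then
        complex_of_real (1 / (2 * real N * sqrt (real N))) *
        (\<Sum>v<2*N. (if real v / real N \<in> A then 1 else 0) * cis (2*pi*(x - real m / real N)*real v))
      else 0)"

lemma Phi_momproj_fine_grid:
  fixes N q :: nat and j :: int
  assumes N: "N > 0" and q: "q > 0"
  defines "x \<equiv> of_int j / real (2*N*q)"
  shows "Phi_momproj N m A x
       = (if int q dvd j then complex_of_real (1 / (2 * real N * sqrt (real N)))
            * (\<Sum>v<2*N. (if real v / real N \<in> A then 1 else 0) * cis (2*pi*(x - real m / real N) * real v))
          else 0)"
proof -
  have "(\<exists>l::int. x = of_int l / real (2*N)) \<longleftrightarrow> int q dvd j"
  proof
    assume "\<exists>l::int. x = of_int l / real (2*N)"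
    then obtain l :: int where "x = of_int l / real (2*N)" by blast
    then have "real_of_int j = real_of_int (int q * l)" using q N by (simp add: x_def field_simps)
    then show "int q dvd j" by (simp only: of_int_eq_iff) simp
  next
    assume "int q dvd j"
    then obtain l where "j = int q * l" by blast
    then show "\<exists>l::int. x = of_int l / real (2*N)" using q by (auto simp: x_def)
  qed
  then show ?thesis by (simp add: Phi_momproj_def)
qed

lemma valid_res_Phi_resolution:
  assumes N: "N > 0" and h: "h = 1 / (2*pi*real N)"
    and valid: "valid_res h M P A (Phi N (int m))"
    and periods: "\<And>t. \<forall>p. p \<in> A \<longleftrightarrow> p + t \<in> A \<Longrightarrow> \<exists>k::int. t = 2 * of_int k"
  obtains q where "q > 0" and "M = 2*N*q"
proof -
  have "M > 0" and "\<forall>p. p \<in> A \<longleftrightarrow> p + real M / real N \<in> A"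
    using valid N by (auto simp: valid_res_def h)
  then obtain k :: int where k: "real M / real N = 2 * of_int k"
    using periods by blast
  then have "0 < real_of_int k * (2 * real N)"
    using N \<open>M > 0\<close> by (simp add: field_simps)
  then have "k > 0" using N by (simp add: zero_less_mult_iff)
  moreover have "real M = real (2*N*nat k)"
    using k N \<open>k > 0\<close> by (simp add: field_simps)
  ultimately show thesis
    using that[of "nat k"] by (simp only: of_nat_eq_iff)
qed

lemma valid_res_Phi_double:
  assumes N: "N > 0" and h: "h = 1 / (2*pi*real N)"
    and A: "\<And>p k. p + 2 * of_int k \<in> A \<longleftrightarrow> p \<in> A"
  shows "valid_res h (2*N) 1 A (Phi N (int m))"
  unfolding valid_res_def
proof (intro conjI allI impI)
  fix x assume "Phi N (int m) x \<noteq> 0"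
  then obtain k :: int where "x = of_int (int m) / real N + of_int k"
    by (auto simp: Phi_def split: if_splits)
  then have "x = of_int (2 * int m + 2 * int N * k) / real (2*N)"
    using N by (simp add: field_simps)
  then show "\<exists>k::int. x = of_int k / real (2*N)" by blast
next
  fix x
  show "Phi N (int m) (x + real 1) = Phi N (int m) x"
    using Phi_add_int[of N "int m" x 1] by simp
next
  fix p
  show "p \<in> A \<longleftrightarrow> p + 2 * pi * h * real (2*N) \<in> A"
    using N A[of p 1] by (simp add: h)
qed (use N in simp_all)

lemma momproj_res_Phi_grid:
  assumes N: "N > 0" and m: "m < N" and q: "q > 0" and P: "P > 0" and h: "h = 1 / (2*pi*real N)"
  defines "M \<equiv> 2*N*q"
  shows "momproj_res h M P A (Phi N (int m)) (of_int j / real M)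
       = complex_of_real (1 / (real M * sqrt (real N)))
         * (\<Sum>t<M. (if real t / real N \<in> A then 1 else 0) * cis (2*pi*(of_int j / real M - real m / real N) * real t))"
proof -
  define x where "x = of_int j / real M"
  define y where "y = x - real m / real N"
  define ind where "ind t = (if 2*pi*h*real t / real P \<in> A then 1 else (0::complex))" for t :: nat
  have exp_cis: "exp (\<i> * complex_of_real ((x - r) * (2*pi*h*real s / real P) / h))
               = cis (2*pi*(x - r) * real s / real P)" for r :: real and s :: nat
  proof -
    have "(x - r) * (2*pi*h*real s / real P) / h = 2*pi*(x - r) * real s / real P"
      using N P by (simp add: h field_simps)
    then show ?thesis by (simp only: cis_conv_exp)
  qed
  have "momproj_res h M P A (Phi N (int m)) x
      = 1 / of_nat (P*M) * (\<Sum>s<P*M. ind s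
          * (\<Sum>r<P*M. Phi N (int m) (real r / real M) * cis (2*pi*(x - real r / real M) * real s / real P)))"
    using x_def unfolding momproj_res_def exp_cis ind_def by auto
  also have "\<dots> = 1 / of_nat (P*M) * (\<Sum>s<P*M. if P dvd s then ind s
          * (of_nat P * complex_of_real (1 / sqrt (real N)) * cis (2*pi*y * real s / real P)) else 0)"
    unfolding M_def sum_Phi_cis[OF N m q P] y_def by (intro arg_cong[where f="(*) _"] sum.cong) simp_all
  also have "\<dots> = 1 / of_nat (P*M) * of_nat P * complex_of_real (1 / sqrt (real N))
                  * (\<Sum>t<M. (if real t / real N \<in> A then 1 else 0) * cis (2*pi*y * real t))"
  proof -
    have "ind (t*P) = (if real t / real N \<in> A then 1 else 0)" for t
      using N P by (simp add: ind_def h)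
    moreover have "cis (2*pi*y * real (t*P) / real P) = cis (2*pi*y * real t)" for t
      using P by (simp add: mult_ac)
    ultimately show ?thesis
      unfolding sum_lessThan_if_dvd[OF P] by (simp add: sum_distrib_left mult_ac)
  qed
  also have "1 / of_nat (P*M) * of_nat P * complex_of_real (1 / sqrt (real N))
           = complex_of_real (1 / (real M * sqrt (real N)))"
    using P by simp
  finally show ?thesis by (simp only: x_def y_def)
qed

text \<open>The value does not depend on the resolution \<open>(M, P)\<close>; this is what makes the
  definite description in \<^const>\<open>momproj\<close> determinate.\<close>
lemma momproj_res_Phi:
  assumes N: "N > 0" and m: "m < N" and h: "h = 1 / (2*pi*real N)"
    and valid: "valid_res h M P A (Phi N (int m))"
    and A: "\<And>p k. p + 2 * of_int k \<in> A \<longleftrightarrow> p \<in> A"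
    and periods: "\<And>t. \<forall>p. p \<in> A \<longleftrightarrow> p + t \<in> A \<Longrightarrow> \<exists>k::int. t = 2 * of_int k"
  shows "momproj_res h M P A (Phi N (int m)) = Phi_momproj N m A"
proof
  fix x
  obtain q where q: "q > 0" and M: "M = 2*N*q"
    using valid_res_Phi_resolution[OF N h valid periods] .
  have P: "P > 0" using valid by (simp add: valid_res_def)
  show "momproj_res h M P A (Phi N (int m)) x = Phi_momproj N m A x"
  proof (cases "\<exists>j::int. x = of_int j / real M")
    case True
    then obtain j :: int where x: "x = of_int j / real (2*N*q)" by (auto simp: M)
    have "real (2*N*q) = 2 * real N * real q" by simp
    then show ?thesis
      unfolding x M momproj_res_Phi_grid[OF N m q P h] Phi_momproj_fine_grid[OF N q]
        sum_even_periodic_cis[OF N q A] using q N by auto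
  next
    case False
    have "\<not> (\<exists>l::int. x = of_int l / real (2*N))"
    proof
      assume "\<exists>l::int. x = of_int l / real (2*N)"
      then obtain l :: int where "x = of_int l / real (2*N)" by blast
      then have "x = of_int (l * int q) / real M" using q by (simp add: M)
      then show False using False by blast
    qed
    then show ?thesis using False by (simp add: momproj_res_def Phi_momproj_def)
  qed
qed

lemma momproj_Phi:
  assumes N: "N > 0" and m: "m < N" and h: "h = 1 / (2*pi*real N)"
    and A: "\<And>p k. p + 2 * of_int k \<in> A \<longleftrightarrow> p \<in> A"
    and periods: "\<And>t. \<forall>p. p \<in> A \<longleftrightarrow> p + t \<in> A \<Longrightarrow> \<exists>k::int. t = 2 * of_int k"
  shows "momproj h A (Phi N (int m)) = Phi_momproj N m A"
  unfolding momproj_def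
proof (rule the_equality)
  show "\<exists>M P. valid_res h M P A (Phi N (int m)) \<and> Phi_momproj N m A = momproj_res h M P A (Phi N (int m))"
    using valid_res_Phi_double[OF N h A] momproj_res_Phi[OF N m h _ A periods] by metis
qed (use momproj_res_Phi[OF N m h _ A periods] in blast)

section \<open>Matrix elements of F\<close>

lemma Fop_Phi_node:
  assumes N: "N > 0" and n: "n < N" and m: "m < N"
  shows "Fop (1 / (2*pi*real N)) (Phi N (int m)) (real n / real N)
       = complex_of_real (sqrt 2) * (Phi_momproj N m setE (real n / real (2*N))
                                     + Phi_momproj N m setO (real n / real (2*N) - 1/2))"
proof -
  define y where "y = real n / real (2*N)"
  have "0 \<le> y" "y < 1/2" using n by (auto simp: y_def field_simps)
  then have "\<lfloor>y\<rfloor> = 0" by (simp add: floor_eq_iff)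
  then have "y \<in> setL" "y \<notin> setR" using \<open>y < 1/2\<close> by (simp_all add: setL_def setR_def)
  moreover have "real n / real N / 2 = y" by (simp add: y_def)
  ultimately have "Fop (1 / (2*pi*real N)) (Phi N (int m)) (real n / real N)
      = complex_of_real (sqrt 2) * (Phi_momproj N m setE y + Phi_momproj N m setO (y - 1/2))"
    by (simp add: Fop_def Sop_def posproj_def Xop_def Yop_def
        momproj_Phi[OF N m refl setE_add_even setE_period_even]
        momproj_Phi[OF N m refl setO_add_even setO_period_even])
  then show ?thesis by (simp only: y_def)
qed

lemma Phi_momproj_setE_node:
  assumes "n < N"
  shows "Phi_momproj N m setE (real n / real (2*N))
       = complex_of_real (1 / (2 * real N * sqrt (real N)))
         * (\<Sum>w<N. cis (2*pi*(real n / real (2*N) - real m / real N) * real w))"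
proof -
  have "\<exists>j::int. real n / real (2*N) = of_int j / real (2*N)"
    by (intro exI[of _ "int n"]) simp
  moreover have "(\<Sum>v<2*N. (if real v / real N \<in> setE then 1 else 0) * f v)
               = (\<Sum>v<2*N. if v < N then f v else 0)" for f :: "nat \<Rightarrow> complex"
    by (intro sum.cong) (simp_all add: setE_grid)
  ultimately show ?thesis
    unfolding Phi_momproj_def sum_lessThan_double_lower by simp
qed

lemma Phi_momproj_setO_node:
  fixes N n m :: nat
  assumes "n < N" and "even N"
  defines "\<alpha> \<equiv> real n / real (2*N) - real m / real N"
  shows "Phi_momproj N m setO (real n / real (2*N) - 1/2)
       = complex_of_real (1 / (2 * real N * sqrt (real N)))
         * (\<Sum>w<N. (-1) ^ (n + w) * cis (2*pi*\<alpha>*real w))"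
proof -
  obtain K where K: "N = 2*K" "K > 0" using assms(1,2) by (auto elim!: evenE)
  have "\<exists>j::int. real n / real (2*N) - 1/2 = of_int j / real (2*N)"
    using assms by (intro exI[of _ "int n - int N"]) (simp add: field_simps)
  moreover have "real n / real (2*N) - 1/2 - real m / real N = \<alpha> - 1/2"
    by (simp add: \<alpha>_def)
  ultimately have "Phi_momproj N m setO (real n / real (2*N) - 1/2)
      = complex_of_real (1 / (2 * real N * sqrt (real N)))
        * (\<Sum>v<2*N. (if real v / real N \<in> setO then 1 else 0) * cis (2*pi*(\<alpha> - 1/2)*real v))"
    unfolding Phi_momproj_def by (simp only: if_True)
  also have "(\<Sum>v<2*N. (if real v / real N \<in> setO then 1 else 0) * cis (2*pi*(\<alpha> - 1/2)*real v))
           = (\<Sum>v<2*N. if N \<le> v then cis (2*pi*(\<alpha> - 1/2)*real v) else 0)"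
    by (intro sum.cong) (simp_all add: setO_grid)
  also have "\<dots> = (\<Sum>w<N. cis (2*pi*(\<alpha> - 1/2)*real (N + w)))"
    by (rule sum_lessThan_double_upper)
  also have "\<dots> = (\<Sum>w<N. (-1) ^ (n + w) * cis (2*pi*\<alpha>*real w))"
  proof (rule sum.cong[OF refl])
    fix w
    have "cis (2*pi*(\<alpha> - 1/2) * real (N + w)) = cis (2*pi*\<alpha>*real w + pi * real (n + w))"
      by (rule cis_eqI_2pi[where k="- int m - int w - int K"]) (use K in \<open>simp add: \<alpha>_def field_simps\<close>)
    also have "\<dots> = cis (pi * real (n + w)) * cis (2*pi*\<alpha>*real w)"
      by (simp add: cis_mult add.commute)
    finally show "cis (2*pi*(\<alpha> - 1/2) * real (N + w)) = (-1) ^ (n + w) * cis (2*pi*\<alpha>*real w)"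
      by (simp only: cis_pi_nat)
  qed
  finally show ?thesis .
qed

lemma ipP_Phi_Fop_Phi:
  assumes N: "N > 0" and ev: "even N" and n: "n < N" and m: "m < N"
  defines "\<alpha> \<equiv> real n / real (2*N) - real m / real N"
  shows "ipP N (Phi N (int n)) (Fop (1 / (2*pi*real N)) (Phi N (int m)))
       = complex_of_real (sqrt 2 / real N) * (\<Sum>t<N div 2. cis (2*pi*\<alpha>*real (2*t + n mod 2)))"
proof -
  define a where "a w = cis (2*pi*\<alpha>*real w)" for w
  define c0 where "c0 = 1 / (2 * real N * sqrt (real N))"
  have "(\<Sum>w<N. a w) + (\<Sum>w<N. (-1) ^ (n + w) * a w) = (\<Sum>w<N. (1 + (-1) ^ (n + w)) * a w)"
    by (simp only: sum.distrib[symmetric] distrib_right mult_1)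
  then have "ipP N (Phi N (int n)) (Fop (1 / (2*pi*real N)) (Phi N (int m)))
      = complex_of_real (sqrt (real N) * sqrt 2 * c0) * (\<Sum>w<N. (1 + (-1) ^ (n + w)) * a w)"
    unfolding ipP_Phi_left[OF N n] Fop_Phi_node[OF N n m] Phi_momproj_setE_node[OF n]
      Phi_momproj_setO_node[OF n ev] \<alpha>_def[symmetric] a_def[symmetric] c0_def[symmetric]
    by (simp only: of_real_mult distrib_left[symmetric] mult.assoc)
  also have "\<dots> = complex_of_real (2 * (sqrt (real N) * sqrt 2 * c0)) * (\<Sum>t<N div 2. a (2*t + n mod 2))"
    using sum_parity_filter[where K = "N div 2" and n = n and f = a] ev by simp
  also have "2 * (sqrt (real N) * sqrt 2 * c0) = sqrt 2 / real N"
    using N by (simp add: c0_def field_simps)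
  finally show ?thesis by (simp only: a_def)
qed

section \<open>The block Fourier matrix\<close>

lemma FinvN_cis: "FinvN N n a = complex_of_real (1 / sqrt (real N)) * cis (2*pi*real n*real a / real N)"
  by (simp add: FinvN_def cis_conv_exp divide_inverse mult_ac)

lemma Fhalf_cis:
  "Fhalf N j k = complex_of_real (1 / sqrt (real (N div 2))) * cis (- 2*pi*real j*real k / real (N div 2))"
  by (simp add: Fhalf_def cis_conv_exp divide_inverse mult_ac)

lemma Mmat_lower_block:
  assumes "a < N div 2" and "m < N div 2"
  shows "Mmat N n a m = cis (pi * real (n mod 2) * (real n - 2 * real m) / real N) * Fhalf N a m"
proof (cases "even n")
  case False
  then have "n mod 2 = 1" by presburger
  then show ?thesis using assms False by (simp add: Mmat_def cis_conv_exp mult_ac)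
qed (use assms in \<open>simp add: Mmat_def\<close>)

lemma Mmat_upper_block:
  assumes "a < N div 2" and "m < N div 2"
  shows "Mmat N n (N div 2 + a) (N div 2 + m)
       = cis (pi * real (n mod 2) * (real n - (2 * real (N div 2 + m) - real N)) / real N) * Fhalf N a m"
proof (cases "even n")
  case False
  then have "n mod 2 = 1" by presburger
  then show ?thesis using assms False by (simp add: Mmat_def cis_conv_exp mult_ac)
qed (use assms in \<open>simp add: Mmat_def\<close>)

lemma FinvN_Mmat_lower_block:
  fixes N n m a :: nat
  assumes "even N" and a: "a < N div 2" and m: "m < N div 2"
  defines "\<alpha> \<equiv> real n / real (2*N) - real m / real N"
  shows "FinvN N n a * Mmat N n a m = complex_of_real (sqrt 2 / real N) * cis (2*pi*\<alpha>*real (2*a + n mod 2))"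
proof -
  define K where "K = N div 2"
  have K: "N = 2*K" "K > 0" using assms(1) a by (auto simp: K_def)
  have "FinvN N n a * Mmat N n a m
      = complex_of_real (1 / sqrt (real N) * (1 / sqrt (real K)))
        * (cis (2*pi*real n*real a / real N) * cis (pi * real (n mod 2) * (real n - 2 * real m) / real N)
           * cis (- 2*pi*real a*real m / real K))"
    unfolding FinvN_cis Mmat_lower_block[OF a m] Fhalf_cis K_def[symmetric]
    by (simp add: mult_ac)
  also have "\<dots> = complex_of_real (1 / sqrt (real N) * (1 / sqrt (real K)))
        * cis (2*pi*real n*real a / real N + pi * real (n mod 2) * (real n - 2 * real m) / real N
               + (- 2*pi*real a*real m / real K))"
    by (simp only: cis_mult)
  also have "\<dots> = complex_of_real (sqrt 2 / real N) * cis (2*pi*\<alpha>*real (2*a + n mod 2))"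
    unfolding inverse_sqrt_double_mult[OF K(1)] using K
    by (intro arg_cong[where f="\<lambda>t. _ * cis t"]) (simp add: \<alpha>_def field_simps)
  finally show ?thesis .
qed

lemma FinvN_Mmat_upper_block:
  fixes N n m a :: nat
  assumes "even N" and a: "a < N div 2" and m: "m < N div 2"
  defines "\<alpha> \<equiv> real n / real (2*N) - real (N div 2 + m) / real N"
  shows "FinvN N n (N div 2 + a) * Mmat N n (N div 2 + a) (N div 2 + m)
       = complex_of_real (sqrt 2 / real N) * cis (2*pi*\<alpha>*real (2*a + n mod 2))"
proof -
  define K where "K = N div 2"
  have K: "N = 2*K" "K > 0" using assms(1) a by (auto simp: K_def)
  have "FinvN N n (K + a) * Mmat N n (K + a) (K + m)
      = complex_of_real (1 / sqrt (real N) * (1 / sqrt (real K)))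
        * (cis (2*pi*real n*real (K + a) / real N)
           * cis (pi * real (n mod 2) * (real n - (2 * real (K + m) - real N)) / real N)
           * cis (- 2*pi*real a*real m / real K))"
    unfolding FinvN_cis Mmat_upper_block[OF a m, folded K_def] Fhalf_cis K_def[symmetric]
    by (simp add: mult_ac)
  also have "\<dots> = complex_of_real (1 / sqrt (real N) * (1 / sqrt (real K)))
        * cis (2*pi*real n*real (K + a) / real N
               + pi * real (n mod 2) * (real n - (2 * real (K + m) - real N)) / real N
               + (- 2*pi*real a*real m / real K))"
    by (simp only: cis_mult)
  also have "\<dots> = complex_of_real (sqrt 2 / real N) * cis (2*pi*\<alpha>*real (2*a + n mod 2))"
    unfolding inverse_sqrt_double_mult[OF K(1)]
  proof (intro arg_cong[where f="(*) _"])
    \<comment> \<open>the two phases differ by \<open>\<pi> (n + n mod 2) + 2 \<pi> a\<close>\<close>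
    have "real n = 2 * real (n div 2) + real (n mod 2)"
      by (metis div_mult_mod_eq mult.commute of_nat_add of_nat_mult of_nat_numeral)
    then show "cis (2*pi*real n*real (K + a) / real N
               + pi * real (n mod 2) * (real n - (2 * real (K + m) - real N)) / real N
               + (- 2*pi*real a*real m / real K)) = cis (2*pi*\<alpha>*real (2*a + n mod 2))"
      by (intro cis_eqI_2pi[where k="int (n div 2) + int (n mod 2) + int a"])
         (use K in \<open>simp add: \<alpha>_def K_def[symmetric] field_simps\<close>)
  qed
  finally show ?thesis by (simp only: K_def)
qed

lemma sum_FinvN_Mmat:
  fixes N n m :: nat
  assumes N: "N > 0" and ev: "even N" and m: "m < N"
  defines "\<alpha> \<equiv> real n / real (2*N) - real m / real N"
  shows "(\<Sum>a<N. FinvN N n a * Mmat N n a m)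
       = complex_of_real (sqrt 2 / real N) * (\<Sum>t<N div 2. cis (2*pi*\<alpha>*real (2*t + n mod 2)))"
proof -
  define K where "K = N div 2"
  have NK: "N = 2*K" using ev by (simp add: K_def)
  have split: "(\<Sum>a<N. FinvN N n a * Mmat N n a m)
      = (\<Sum>a<K. FinvN N n a * Mmat N n a m) + (\<Sum>a<K. FinvN N n (K + a) * Mmat N n (K + a) m)"
    unfolding NK by (rule sum_lessThan_double)
  show ?thesis
  proof (cases "m < K")
    case True
    have "(\<Sum>a<K. FinvN N n (K + a) * Mmat N n (K + a) m) = 0"
      using True by (simp add: Mmat_def K_def)
    then show ?thesis
      unfolding split using FinvN_Mmat_lower_block[OF ev _ True[unfolded K_def]]
      by (simp add: K_def \<alpha>_def sum_distrib_left)
  next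
    case False
    then obtain m' where m': "m = K + m'" "m' < K" using m NK by (metis add_diff_inverse_nat add_less_cancel_left mult_2)
    have "(\<Sum>a<K. FinvN N n a * Mmat N n a m) = 0"
      using False by (simp add: Mmat_def K_def)
    then show ?thesis
      unfolding split using FinvN_Mmat_upper_block[OF ev _ m'(2)[unfolded K_def]]
      by (simp add: K_def \<alpha>_def m'(1) sum_distrib_left)
  qed
qed

theorem mainTheorem6:
  fixes N n m :: nat
  assumes "N > 0" and "even N" and "n < N" and "m < N"
  shows "ipP N (Phi N (int n)) (Fop (1 / (2 * pi * real N)) (Phi N (int m)))
         = (\<Sum>a<N. FinvN N n a * Mmat N n a m)"
  unfolding ipP_Phi_Fop_Phi[OF assms] sum_FinvN_Mmat[OF assms(1,2,4)] ..

end
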